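(* Let $k\ge 3$ and $p=2^k$. In the $k$-dimensional Poisson regression model with complete interactions, let $\boldsymbol{\beta}$ have intercept $\beta_0=0$, main effects $\beta_1=\dots=\beta_k=-1$, and all interaction parameters $\beta_{ij},\dots,\beta_{12\dots k}$ equal to $0$. Then the design which assigns equal weights $1/p$ to the $2^k$ settings of the full factorial $\{0,2\}^k$ is locally $D$-optimal at $\boldsymbol{\beta}$ on $\mathcal{X}=[0,\infty)^k$.
   Context: In the $k$-dimensional Poisson regression model with complete interactions, an observation at $\mathbf{x}=(x_1,\dots,x_k)$ is Poisson distributed with mean $\lambda(\mathbf{x})=\exp(\mathbf{f}(\mathbf{x})^\top\boldsymbol{\beta})$, where $\mathbf{f}(\mathbf{x})$ consists of all $2^k$ monomials $\prod_{j\in S}x_j$, $S\subseteq\{1,\dots,k\}$, so that $\mathbf{f}(\mathbf{x})^\top\boldsymbol{\beta}=\beta_0+\sum_j\beta_jx_j+\sum_{i<j}\beta_{ij}x_ix_j+\dots+\beta_{12\dots k}x_1x_2\cdots x_k$. A design $\xi$ is a finite collection of distinct settings $\mathbf{x}_i\in\mathcal{X}$ with weights $w_i\ge0$ summing to $1$; its information matrix is $\mathbf{M}_{\boldsymbol{\beta}}(\xi)=\sum_i w_i\lambda(\mathbf{x}_i)\mathbf{f}(\mathbf{x}_i)\mathbf{f}(\mathbf{x}_i)^\top$. A design is locally $D$-optimal at $\boldsymbol{\beta}$ on $\mathcal{X}$ if it maximizes $\det\mathbf{M}_{\boldsymbol{\beta}}(\xi)$ over all designs on $\mathcal{X}$.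 *)

theory Defs
  imports Main "Jordan_Normal_Form.Determinant"
begin

text \<open>The 2^k regression functions are indexed by m < 2^k, where m encodes the subset
  S_m = {j < k. bit m j} of {0..k-1}; f_m(x) = prod of x!j over j in S_m.\<close>

definition monset :: "nat \<Rightarrow> nat \<Rightarrow> nat set" where
  "monset k m = {j. j < k \<and> bit m j}"

definition fmon :: "nat \<Rightarrow> nat \<Rightarrow> real list \<Rightarrow> real" where
  "fmon k m x = (\<Prod>j\<in>monset k m. x ! j)"

definition intensity :: "nat \<Rightarrow> (nat \<Rightarrow> real) \<Rightarrow> real list \<Rightarrow> real" where
  "intensity k \<beta> x = exp (\<Sum>m<2^k. \<beta> m * fmon k m x)"

definition info_mat :: "nat \<Rightarrow> (nat \<Rightarrow> real) \<Rightarrow> real list set \<Rightarrow> (real list \<Rightarrow> real) \<Rightarrow> real mat" where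
  "info_mat k \<beta> S w = mat (2^k) (2^k)
     (\<lambda>(i, j). \<Sum>x\<in>S. w x * intensity k \<beta> x * fmon k i x * fmon k j x)"

definition is_design :: "nat \<Rightarrow> real list set \<Rightarrow> real list set \<Rightarrow> (real list \<Rightarrow> real) \<Rightarrow> bool" where
  "is_design k X S w \<longleftrightarrow> finite S \<and> S \<subseteq> X \<and> (\<forall>x\<in>S. length x = k)
     \<and> (\<forall>x\<in>S. w x \<ge> 0) \<and> (\<Sum>x\<in>S. w x) = 1"

definition locally_D_optimal ::
  "nat \<Rightarrow> (nat \<Rightarrow> real) \<Rightarrow> real list set \<Rightarrow> real list set \<Rightarrow> (real list \<Rightarrow> real) \<Rightarrow> bool" where
  "locally_D_optimal k \<beta> X S w \<longleftrightarrow> is_design k X S w \<and>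
     (\<forall>S' w'. is_design k X S' w' \<longrightarrow> det (info_mat k \<beta> S' w') \<le> det (info_mat k \<beta> S w))"

definition nonneg_orthant :: "nat \<Rightarrow> real list set" where
  "nonneg_orthant k = {x. length x = k \<and> (\<forall>j<k. x ! j \<ge> 0)}"

definition full_factorial :: "nat \<Rightarrow> real \<Rightarrow> real list set" where
  "full_factorial k a = {x. length x = k \<and> (\<forall>j<k. x ! j = 0 \<or> x ! j = a)}"

end

theory Submission
  imports Defs
begin

text \<open>
  Write the model in the Lagrange basis of the grid {0,2}^k,
  h_T(x) = (\<Prod>j\<in>T. x_j / 2) * (\<Prod>j\<notin>T. 1 - x_j / 2),
  so that \<Prod>j\<in>S. x_j = 2^|S| * (\<Sum>T\<supseteq>S. h_T(x)).  This change of basis is a fixed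
  matrix P, hence det M(\<xi>) = det(P)^2 * det H(\<xi>), where H(\<xi>) is the information matrix in
  the new basis.  Since h_T is the indicator of the grid point with support T, the factorial
  design has a diagonal H*, with H*_TT = e^(-2|T|) / 2^k.  For any design \<xi> on [0,\<infinity>)^k,
  Hadamard's inequality gives det H(\<xi>) \<le> \<Prod>T H_TT, and
    \<Sum>T H_TT / H*_TT = \<Sum>x w_x 2^k \<Prod>j \<phi>(x_j) \<le> 2^k,
  where \<phi>(t) = (e^2 (t/2)^2 + (1 - t/2)^2) e^(-t) \<le> 1 for t \<ge> 0; here 2^k \<Prod>j \<phi>(x_j) is
  the sensitivity function of the factorial design.  By the AM-GM inequality the ratios
  H_TT / H*_TT have product at most 1, so det H(\<xi>) \<le> det H*.
\<close>

section \<open>Hadamard's inequality\<close>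

definition quad_form :: "nat \<Rightarrow> real mat \<Rightarrow> (nat \<Rightarrow> real) \<Rightarrow> real" where
  "quad_form n A v = (\<Sum>i<n. \<Sum>j<n. v i * A $$ (i, j) * v j)"

definition psd_mat :: "nat \<Rightarrow> real mat \<Rightarrow> bool" where
  "psd_mat n A \<longleftrightarrow> (\<forall>v. 0 \<le> quad_form n A v)"

lemma sum_mult_two_point:
  fixes g :: "nat \<Rightarrow> real"
  assumes "p < n" "q < n"
  shows "(\<Sum>j<n. g j * ((if j = p then s else 0) + (if j = q then t else 0))) = g p * s + g q * t"
  using assms by (simp add: distrib_left sum.distrib if_distrib[of "(*) _"] cong: if_cong)

lemma quad_form_two_point:
  assumes "p < n" "q < n"
  shows "quad_form n A (\<lambda>l. (if l = p then s else 0) + (if l = q then t else 0))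
    = s * s * A $$ (p, p) + s * t * (A $$ (p, q) + A $$ (q, p)) + t * t * A $$ (q, q)"
proof -
  let ?v = "\<lambda>l. (if l = p then s else 0) + (if l = q then t else 0)"
  have row: "(\<Sum>j<n. ?v i * A $$ (i, j) * ?v j) = (A $$ (i, p) * s + A $$ (i, q) * t) * ?v i" for i
    using sum_mult_two_point[OF assms, of "\<lambda>j. ?v i * A $$ (i, j)" s t] by (simp add: algebra_simps)
  have "quad_form n A ?v = (\<Sum>i<n. (A $$ (i, p) * s + A $$ (i, q) * t) * ?v i)"
    unfolding quad_form_def row ..
  also have "\<dots> = (A $$ (p, p) * s + A $$ (p, q) * t) * s + (A $$ (q, p) * s + A $$ (q, q) * t) * t"
    by (rule sum_mult_two_point[OF assms])
  finally show ?thesis by (simp add: algebra_simps)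
qed

lemma psd_mat_diag_nonneg:
  assumes "psd_mat n A" "i < n"
  shows "0 \<le> A $$ (i, i)"
proof -
  have "0 \<le> quad_form n A (\<lambda>l. (if l = i then 1 else 0) + (if l = i then 0 else 0))"
    using assms(1) unfolding psd_mat_def by blast
  then show ?thesis unfolding quad_form_two_point[OF assms(2) assms(2)] by simp
qed

lemma psd_mat_zero_diag_entry:
  assumes "psd_mat n A" "p < n" "q < n" "A $$ (p, p) = 0" "A $$ (q, p) = A $$ (p, q)"
  shows "A $$ (p, q) = 0"
proof (rule ccontr)
  assume nz: "A $$ (p, q) \<noteq> 0"
  define s where "s = - (A $$ (q, q) + 1) / (2 * A $$ (p, q))"
  have "0 \<le> quad_form n A (\<lambda>l. (if l = p then s else 0) + (if l = q then 1 else 0))"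
    using assms(1) unfolding psd_mat_def by blast
  also have "\<dots> = -1"
    unfolding quad_form_two_point[OF assms(2,3)] using assms(4,5) nz by (simp add: s_def field_simps)
  finally show False by simp
qed

definition schur_compl :: "nat \<Rightarrow> real mat \<Rightarrow> real mat" where
  "schur_compl n A = mat n n
     (\<lambda>(i, j). A $$ (Suc i, Suc j) - A $$ (Suc i, 0) * A $$ (0, Suc j) / A $$ (0, 0))"

lemma det_eq_pivot_mult_det_schur_compl:
  assumes A: "A \<in> carrier_mat (Suc n) (Suc n)" and pivot: "A $$ (0, 0) \<noteq> 0"
  shows "det A = A $$ (0, 0) * det (schur_compl n A)"
proof -
  define r where "r i = (if i = 0 then 0 else A $$ (i, 0) / A $$ (0, 0))" for i
  define E where "E = mat (Suc n) (Suc n) (\<lambda>(i, l). (if l = i then 1 else 0) - (if l = 0 then r i else 0))"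
  have E: "E \<in> carrier_mat (Suc n) (Suc n)" by (simp add: E_def)
  have det_E: "det E = 1"
    by (subst det_lower_triangular[OF _ E]) (auto simp: E_def r_def prod_list_diag_prod cong: if_cong)
  have EA: "E * A = mat (Suc n) (Suc n) (\<lambda>(i, j). A $$ (i, j) - r i * A $$ (0, j))"
    by (rule eq_matI) (use A in \<open>simp_all add: E_def scalar_prod_def left_diff_distrib
        sum_subtractf atLeast0LessThan if_distrib[of "\<lambda>x. x * _"] del: sum.lessThan_Suc cong: if_cong\<close>)
  have "det A = det (E * A)" using det_mult[OF E A] det_E by simp
  also have "\<dots> = (\<Sum>i<Suc n. (E * A) $$ (i, 0) * cofactor (E * A) i 0)"
    by (rule laplace_expansion_column) (simp_all add: EA)
  also have "\<dots> = A $$ (0, 0) * det (mat_delete (E * A) 0 0)"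
    using pivot by (simp add: EA r_def cofactor_def sum.lessThan_Suc_shift del: sum.lessThan_Suc)
  also have "mat_delete (E * A) 0 0 = schur_compl n A"
    by (rule eq_matI) (simp_all add: EA mat_delete_def schur_compl_def r_def)
  finally show ?thesis .
qed

lemma psd_mat_schur_compl:
  assumes sym: "\<And>i j. i < Suc n \<Longrightarrow> j < Suc n \<Longrightarrow> A $$ (j, i) = A $$ (i, j)"
    and psd: "psd_mat (Suc n) A" and pivot: "A $$ (0, 0) > 0"
  shows "psd_mat n (schur_compl n A)"
  unfolding psd_mat_def
proof
  fix v :: "nat \<Rightarrow> real"
  let ?a = "A $$ (0, 0)"
  define c where "c = (\<Sum>j<n. A $$ (0, Suc j) * v j)"
  \<comment> \<open>extend v by the first coordinate minimising the quadratic form of A\<close>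
  define w where "w l = (if l = 0 then - c / ?a else v (l - 1))" for l
  define vAv where "vAv = (\<Sum>i<n. \<Sum>j<n. v i * A $$ (Suc i, Suc j) * v j)"
  have c_sym: "(\<Sum>i<n. v i * A $$ (Suc i, 0)) = c"
    unfolding c_def by (rule sum.cong) (use sym in auto)
  have "quad_form (Suc n) A w = w 0 * ?a * w 0 + w 0 * (\<Sum>j<n. A $$ (0, Suc j) * w (Suc j))
      + (\<Sum>i<n. w (Suc i) * A $$ (Suc i, 0)) * w 0
      + (\<Sum>i<n. \<Sum>j<n. w (Suc i) * A $$ (Suc i, Suc j) * w (Suc j))"
    by (simp add: quad_form_def sum.lessThan_Suc_shift sum.distrib sum_distrib_left
        sum_distrib_right mult_ac del: sum.lessThan_Suc)
  also have "\<dots> = vAv - c * c / ?a"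
    using pivot by (simp add: w_def c_sym flip: c_def vAv_def)
  also have "\<dots> = vAv - (\<Sum>i<n. v i * A $$ (Suc i, 0)) * c / ?a"
    by (simp add: c_sym)
  also have "\<dots> = vAv - (\<Sum>i<n. \<Sum>j<n. v i * A $$ (Suc i, 0) * (A $$ (0, Suc j) * v j)) / ?a"
    unfolding c_def sum_product ..
  also have "\<dots> = quad_form n (schur_compl n A) v"
    unfolding quad_form_def schur_compl_def vAv_def
    by (simp add: right_diff_distrib left_diff_distrib sum_subtractf sum_divide_distrib mult_ac)
  finally show "0 \<le> quad_form n (schur_compl n A) v"
    using psd unfolding psd_mat_def by metis
qed

lemma schur_compl_diag_le:
  assumes "A $$ (Suc i, 0) = A $$ (0, Suc i)" "A $$ (0, 0) > 0" "i < n"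
  shows "schur_compl n A $$ (i, i) \<le> A $$ (Suc i, Suc i)"
  using assms by (simp add: schur_compl_def)

theorem det_le_prod_diag_if_psd:
  fixes A :: "real mat"
  assumes "A \<in> carrier_mat n n" "\<And>i j. i < n \<Longrightarrow> j < n \<Longrightarrow> A $$ (j, i) = A $$ (i, j)"
    and "psd_mat n A"
  shows "det A \<le> (\<Prod>i<n. A $$ (i, i))"
  using assms
proof (induction n arbitrary: A)
  case 0
  then show ?case
    using det_upper_triangular[OF _ "0.prems"(1)] by (simp add: upper_triangular_def prod_list_diag_prod)
next
  case (Suc n)
  note A = Suc.prems(1) and sym = Suc.prems(2) and psd = Suc.prems(3)
  have diag_nonneg: "0 \<le> A $$ (i, i)" if "i < Suc n" for i
    by (rule psd_mat_diag_nonneg[OF psd that])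
  show ?case
  proof (cases "A $$ (0, 0) = 0")
    case True
    have "A $$ (0, j) = 0" if "j < Suc n" for j
      using psd_mat_zero_diag_entry[OF psd _ that True sym[of 0 j]] that by simp
    then have "det A = 0"
      using laplace_expansion_row[OF A, of 0] by simp
    moreover have "0 \<le> (\<Prod>i<Suc n. A $$ (i, i))"
      by (rule prod_nonneg) (use diag_nonneg in auto)
    ultimately show ?thesis by simp
  next
    case False
    then have pivot: "A $$ (0, 0) > 0" using diag_nonneg[of 0] by simp
    let ?B = "schur_compl n A"
    have B_psd: "psd_mat n ?B" by (rule psd_mat_schur_compl[OF sym psd pivot])
    have "det ?B \<le> (\<Prod>i<n. ?B $$ (i, i))"
      by (rule Suc.IH) (use B_psd sym in \<open>auto simp: schur_compl_def\<close>)
    moreover have "(\<Prod>i<n. ?B $$ (i, i)) \<le> (\<Prod>i<n. A $$ (Suc i, Suc i))"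
      by (rule prod_mono) (use psd_mat_diag_nonneg[OF B_psd] schur_compl_diag_le sym pivot in auto)
    ultimately have "det A \<le> A $$ (0, 0) * (\<Prod>i<n. A $$ (Suc i, Suc i))"
      unfolding det_eq_pivot_mult_det_schur_compl[OF A False] using pivot by simp
    also have "\<dots> = (\<Prod>i<Suc n. A $$ (i, i))"
      by (simp add: prod.lessThan_Suc_shift del: prod.lessThan_Suc)
    finally show ?thesis .
  qed
qed

definition gram_mat :: "nat \<Rightarrow> 'a set \<Rightarrow> ('a \<Rightarrow> real) \<Rightarrow> (nat \<Rightarrow> 'a \<Rightarrow> real) \<Rightarrow> real mat" where
  "gram_mat n S c g = mat n n (\<lambda>(i, j). \<Sum>x\<in>S. c x * g i x * g j x)"

lemma mult_sum_mult_sum: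
  fixes c :: real
  shows "c * (\<Sum>a\<in>A. f a) * (\<Sum>b\<in>B. g b) = (\<Sum>a\<in>A. \<Sum>b\<in>B. c * f a * g b)"
  by (subst sum.swap) (simp add: sum_distrib_left sum_distrib_right mult.assoc)

lemma gram_mat_change_basis:
  assumes P: "P \<in> carrier_mat n n" and g: "\<And>i x. i < n \<Longrightarrow> g i x = (\<Sum>m<n. P $$ (i, m) * h m x)"
  shows "gram_mat n S c g = P * gram_mat n S c h * transpose_mat P"
proof (rule eq_matI)
  fix i j assume "i < dim_row (P * gram_mat n S c h * transpose_mat P)"
    "j < dim_col (P * gram_mat n S c h * transpose_mat P)"
  then have ij: "i < n" "j < n" using P by auto
  have "(P * gram_mat n S c h * transpose_mat P) $$ (i, j)
      = (\<Sum>b<n. \<Sum>a<n. \<Sum>x\<in>S. c x * (P $$ (i, a) * h a x) * (P $$ (j, b) * h b x))"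
    using P ij by (simp add: gram_mat_def scalar_prod_def atLeast0LessThan sum_distrib_left
        sum_distrib_right mult_ac)
  also have "\<dots> = (\<Sum>x\<in>S. \<Sum>a<n. \<Sum>b<n. c x * (P $$ (i, a) * h a x) * (P $$ (j, b) * h b x))"
    by (simp only: sum.swap[where B = S]) (rule sum.cong[OF refl sum.swap])
  also have "\<dots> = (\<Sum>x\<in>S. c x * (\<Sum>a<n. P $$ (i, a) * h a x) * (\<Sum>b<n. P $$ (j, b) * h b x))"
    by (simp only: mult_sum_mult_sum)
  also have "\<dots> = gram_mat n S c g $$ (i, j)"
    using ij by (simp add: gram_mat_def g)
  finally show "gram_mat n S c g $$ (i, j) = (P * gram_mat n S c h * transpose_mat P) $$ (i, j)" ..
qed (use P in \<open>auto simp: gram_mat_def\<close>)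

lemma quad_form_gram_mat:
  "quad_form n (gram_mat n S c h) v = (\<Sum>x\<in>S. c x * (\<Sum>i<n. v i * h i x)\<^sup>2)"
proof -
  have "quad_form n (gram_mat n S c h) v
      = (\<Sum>i<n. \<Sum>j<n. \<Sum>x\<in>S. c x * (v i * h i x) * (v j * h j x))"
    by (simp add: quad_form_def gram_mat_def sum_distrib_left sum_distrib_right mult_ac)
  also have "\<dots> = (\<Sum>x\<in>S. c x * (\<Sum>i<n. v i * h i x)\<^sup>2)"
    by (simp only: sum.swap[where B = S] power2_eq_square mult.assoc[symmetric] mult_sum_mult_sum)
  finally show ?thesis .
qed

lemma psd_gram_mat:
  assumes "\<And>x. x \<in> S \<Longrightarrow> 0 \<le> c x"
  shows "psd_mat n (gram_mat n S c h)"
  unfolding psd_mat_def quad_form_gram_mat using assms by (auto intro: sum_nonneg)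

lemma det_gram_mat_le_prod_diag:
  assumes "\<And>x. x \<in> S \<Longrightarrow> 0 \<le> c x"
  shows "det (gram_mat n S c h) \<le> (\<Prod>i<n. gram_mat n S c h $$ (i, i))"
  by (rule det_le_prod_diag_if_psd[OF _ _ psd_gram_mat[OF assms]]) (auto simp: gram_mat_def mult_ac)

lemma prod_le_one_if_sum_le_card:
  fixes r :: "'a \<Rightarrow> real"
  assumes "finite A" "\<And>a. a \<in> A \<Longrightarrow> 0 \<le> r a" "(\<Sum>a\<in>A. r a) \<le> real (card A)"
  shows "(\<Prod>a\<in>A. r a) \<le> 1"
proof (cases "\<exists>a\<in>A. r a = 0")
  case True
  then show ?thesis using assms(1) by (simp add: prod_zero)
next
  case False
  then have pos: "0 < r a" if "a \<in> A" for a
    using assms(2) that by force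
  have "ln (\<Prod>a\<in>A. r a) = (\<Sum>a\<in>A. ln (r a))"
    by (rule ln_prod[OF assms(1)]) (use pos in fastforce)
  also have "\<dots> \<le> (\<Sum>a\<in>A. r a - 1)"
    by (intro sum_mono ln_le_minus_one pos)
  also have "\<dots> \<le> 0"
    using assms(3) by (simp add: sum_subtractf)
  finally show ?thesis using pos by (simp add: prod_pos)
qed

lemma prod_le_prod_if_sum_ratios_le_card:
  fixes h d :: "'a \<Rightarrow> real"
  assumes "finite A" "\<And>a. a \<in> A \<Longrightarrow> 0 \<le> h a" "\<And>a. a \<in> A \<Longrightarrow> 0 < d a"
    and "(\<Sum>a\<in>A. h a / d a) \<le> real (card A)"
  shows "(\<Prod>a\<in>A. h a) \<le> (\<Prod>a\<in>A. d a)"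
proof -
  have "(\<Prod>a\<in>A. h a) / (\<Prod>a\<in>A. d a) \<le> 1"
    unfolding prod_dividef[symmetric]
    by (rule prod_le_one_if_sum_le_card) (use assms in \<open>auto intro: divide_nonneg_pos\<close>)
  moreover have "0 < (\<Prod>a\<in>A. d a)" using assms(3) by (simp add: prod_pos)
  ultimately show ?thesis by simp
qed

section \<open>Monomials and the Lagrange basis of the grid {0,a}^k\<close>

lemma monset_subset: "monset k m \<subseteq> {..<k}"
  unfolding monset_def by auto

lemma monset_eq_bits:
  assumes "m < 2 ^ k"
  shows "monset k m = {j. bit m j}"
  using assms unfolding monset_def by (auto, metis bit_take_bit_iff take_bit_nat_eq_self_iff)

lemma bij_betw_monset: "bij_betw (monset k) {..<2 ^ k} (Pow {..<k})"
proof -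
  have inj: "inj_on (monset k) {..<2 ^ k}"
    by (rule inj_onI) (simp add: monset_eq_bits set_eq_iff bit_eq_iff)
  have "monset k ` {..<2 ^ k} = Pow {..<k}"
    by (rule card_subset_eq) (use monset_subset card_image[OF inj] in \<open>auto simp: card_Pow\<close>)
  then show ?thesis using inj unfolding bij_betw_def by blast
qed

lemma monset_0: "monset k 0 = {}"
  unfolding monset_def by simp

lemma monset_two_power: "j < k \<Longrightarrow> monset k (2 ^ j) = {j}"
  unfolding monset_def by (auto simp: bit_exp_iff)

lemma monset_cases:
  assumes "m < 2 ^ k"
  obtains "m = 0" | j where "j < k" "m = 2 ^ j" | "2 \<le> card (monset k m)"
proof -
  have eq: "n = m" if "n < 2 ^ k" "monset k n = monset k m" for n
    using bij_betw_monset[of k, THEN bij_betw_imp_inj_on, THEN inj_onD] assms that by blast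
  consider "card (monset k m) = 0" | "card (monset k m) = 1" | "2 \<le> card (monset k m)"
    by linarith
  then show ?thesis
  proof cases
    case 1
    then have "monset k m = monset k 0"
      using finite_subset[OF monset_subset] by (simp add: monset_0)
    then show ?thesis using eq[of 0] that(1) by simp
  next
    case 2
    then obtain j where j: "monset k m = {j}" by (auto simp: card_1_singleton_iff)
    then have "j < k" using monset_subset[of k m] by auto
    then show ?thesis using eq[of "2 ^ j"] j that(2) by (simp add: monset_two_power)
  qed (use that(3) in blast)
qed

lemma intensity_main_effects:
  assumes "\<beta> 0 = 0" "\<And>m. m < 2 ^ k \<Longrightarrow> 2 \<le> card (monset k m) \<Longrightarrow> \<beta> m = 0"
  shows "intensity k \<beta> x = (\<Prod>j<k. exp (\<beta> (2 ^ j) * x ! j))"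
proof -
  let ?main = "(\<lambda>j. 2 ^ j) ` {..<k} :: nat set"
  have "\<beta> m * fmon k m x = 0" if "m < 2 ^ k" "m \<notin> ?main" for m
    using that(1) by (cases rule: monset_cases) (use assms that in auto)
  then have "(\<Sum>m<2 ^ k. \<beta> m * fmon k m x) = (\<Sum>m\<in>?main. \<beta> m * fmon k m x)"
    by (intro sum.mono_neutral_right) auto
  also have "\<dots> = (\<Sum>j<k. \<beta> (2 ^ j) * x ! j)"
    by (subst sum.reindex) (auto simp: inj_on_def fmon_def monset_two_power)
  finally show ?thesis
    unfolding intensity_def by (simp add: exp_sum)
qed

definition lagrange_basis :: "nat \<Rightarrow> real \<Rightarrow> nat set \<Rightarrow> real list \<Rightarrow> real" where
  "lagrange_basis k a T x = (\<Prod>j<k. if j \<in> T then x ! j / a else 1 - x ! j / a)"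

lemma prod_if_subset:
  assumes "finite A" "T \<subseteq> A"
  shows "(\<Prod>j\<in>A. if j \<in> T then f j else g j) = prod f T * prod g (A - T)"
proof -
  have "(\<Prod>j\<in>A. if j \<in> T then f j else g j)
      = prod f (A \<inter> {j. j \<in> T}) * prod g (A \<inter> - {j. j \<in> T})"
    by (rule prod.If_cases[OF assms(1)])
  also have "A \<inter> {j. j \<in> T} = T" using assms(2) by auto
  also have "A \<inter> - {j. j \<in> T} = A - T" by auto
  finally show ?thesis .
qed

lemma monomial_eq_sum_lagrange_basis:
  assumes "a \<noteq> 0" "S \<subseteq> {..<k}"
  shows "(\<Prod>j\<in>S. x ! j)
    = (\<Sum>T\<in>Pow {..<k}. (if S \<subseteq> T then a ^ card S else 0) * lagrange_basis k a T x)"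
proof -
  \<comment> \<open>factorwise, x_j = a (x_j / a) + 0 for j \<in> S and 1 = x_j / a + (1 - x_j / a) otherwise\<close>
  define u where "u j = (if j \<in> S then a else 1) * (x ! j / a)" for j
  define v where "v j = (if j \<in> S then 0 else 1) * (1 - x ! j / a)" for j
  have "(\<Prod>j\<in>S. x ! j) = (\<Prod>j<k. if j \<in> S then x ! j else 1)"
    using prod_if_subset[OF finite_lessThan assms(2), of "\<lambda>j. x ! j" "\<lambda>_. 1"] by simp
  also have "\<dots> = (\<Prod>j<k. u j + v j)"
    using assms(1) by (intro prod.cong) (auto simp: u_def v_def)
  also have "\<dots> = (\<Sum>T\<in>Pow {..<k}. prod u T * prod v ({..<k} - T))"
    by (rule prod_add) simp
  also have "\<dots> = (\<Sum>T\<in>Pow {..<k}. (if S \<subseteq> T then a ^ card S else 0) * lagrange_basis k a T x)"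
  proof (rule sum.cong)
    fix T assume "T \<in> Pow {..<k}"
    then have T: "T \<subseteq> {..<k}" by simp
    show "prod u T * prod v ({..<k} - T) = (if S \<subseteq> T then a ^ card S else 0) * lagrange_basis k a T x"
    proof (cases "S \<subseteq> T")
      case True
      have "prod u T = (\<Prod>j\<in>T. if j \<in> S then a else 1) * (\<Prod>j\<in>T. x ! j / a)"
        unfolding u_def by (rule prod.distrib)
      also have "(\<Prod>j\<in>T. if j \<in> S then a else 1) = (\<Prod>j\<in>S. a)"
        using True finite_subset[OF T] by (intro prod.mono_neutral_cong_right) auto
      moreover have "prod v ({..<k} - T) = (\<Prod>j\<in>{..<k} - T. 1 - x ! j / a)"
        using True by (intro prod.cong) (auto simp: v_def)
      ultimately show ?thesis
        using True by (simp add: lagrange_basis_def prod_if_subset[OF finite_lessThan T])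
    next
      case False
      then obtain j where "j \<in> S" "j \<notin> T" by blast
      then have "prod v ({..<k} - T) = 0"
        using assms(2) by (intro prod_zero) (auto simp: v_def)
      then show ?thesis using False by simp
    qed
  qed simp
  finally show ?thesis .
qed

definition basis_change_mat :: "nat \<Rightarrow> real \<Rightarrow> real mat" where
  "basis_change_mat k a = mat (2 ^ k) (2 ^ k)
     (\<lambda>(i, m). if monset k i \<subseteq> monset k m then a ^ card (monset k i) else 0)"

definition lagrange_info_mat ::
  "nat \<Rightarrow> real \<Rightarrow> (nat \<Rightarrow> real) \<Rightarrow> real list set \<Rightarrow> (real list \<Rightarrow> real) \<Rightarrow> real mat" where
  "lagrange_info_mat k a \<beta> S w =
     gram_mat (2 ^ k) S (\<lambda>x. w x * intensity k \<beta> x) (\<lambda>m. lagrange_basis k a (monset k m))"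

lemma fmon_eq_sum_lagrange_basis:
  assumes "a \<noteq> 0" "i < 2 ^ k"
  shows "fmon k i x = (\<Sum>m<2 ^ k. basis_change_mat k a $$ (i, m) * lagrange_basis k a (monset k m) x)"
proof -
  have "fmon k i x = (\<Sum>T\<in>Pow {..<k}.
      (if monset k i \<subseteq> T then a ^ card (monset k i) else 0) * lagrange_basis k a T x)"
    unfolding fmon_def by (rule monomial_eq_sum_lagrange_basis[OF assms(1) monset_subset])
  also have "\<dots> = (\<Sum>m<2 ^ k.
      (if monset k i \<subseteq> monset k m then a ^ card (monset k i) else 0) * lagrange_basis k a (monset k m) x)"
    by (rule sum.reindex_bij_betw[OF bij_betw_monset, symmetric])
  finally show ?thesis
    using assms(2) by (simp add: basis_change_mat_def)
qed

lemma det_info_mat_eq_det_lagrange_info_mat: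
  assumes "a \<noteq> 0"
  shows "det (info_mat k \<beta> S w) = (det (basis_change_mat k a))\<^sup>2 * det (lagrange_info_mat k a \<beta> S w)"
proof -
  let ?P = "basis_change_mat k a" and ?H = "lagrange_info_mat k a \<beta> S w"
  have P: "?P \<in> carrier_mat (2 ^ k) (2 ^ k)" and H: "?H \<in> carrier_mat (2 ^ k) (2 ^ k)"
    by (simp_all add: basis_change_mat_def lagrange_info_mat_def gram_mat_def)
  have "info_mat k \<beta> S w = gram_mat (2 ^ k) S (\<lambda>x. w x * intensity k \<beta> x) (fmon k)"
    by (simp add: info_mat_def gram_mat_def)
  also have "\<dots> = ?P * ?H * transpose_mat ?P"
    unfolding lagrange_info_mat_def
    by (rule gram_mat_change_basis[OF P fmon_eq_sum_lagrange_basis[OF assms]])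
  finally show ?thesis
    using P H by (simp add: det_mult[of _ "2 ^ k"] det_transpose power2_eq_square)
qed

lemma sum_sq_lagrange_basis:
  "(\<Sum>m<2 ^ k. (lagrange_basis k a (monset k m) x)\<^sup>2 * c ^ card (monset k m))
    = (\<Prod>j<k. c * (x ! j / a)\<^sup>2 + (1 - x ! j / a)\<^sup>2)"
proof -
  have "(\<Prod>j<k. c * (x ! j / a)\<^sup>2 + (1 - x ! j / a)\<^sup>2)
      = (\<Sum>T\<in>Pow {..<k}. (\<Prod>j\<in>T. c * (x ! j / a)\<^sup>2) * (\<Prod>j\<in>{..<k} - T. (1 - x ! j / a)\<^sup>2))"
    by (rule prod_add) simp
  also have "\<dots> = (\<Sum>T\<in>Pow {..<k}. (lagrange_basis k a T x)\<^sup>2 * c ^ card T)"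
  proof (rule sum.cong)
    fix T assume "T \<in> Pow {..<k}"
    then have T: "T \<subseteq> {..<k}" by simp
    show "(\<Prod>j\<in>T. c * (x ! j / a)\<^sup>2) * (\<Prod>j\<in>{..<k} - T. (1 - x ! j / a)\<^sup>2)
        = (lagrange_basis k a T x)\<^sup>2 * c ^ card T"
      unfolding lagrange_basis_def prod_if_subset[OF finite_lessThan T] power_mult_distrib
        prod.distrib prod_power_distrib
      by simp
  qed simp
  also have "\<dots> = (\<Sum>m<2 ^ k. (lagrange_basis k a (monset k m) x)\<^sup>2 * c ^ card (monset k m))"
    by (rule sum.reindex_bij_betw[OF bij_betw_monset, symmetric])
  finally show ?thesis ..
qed

section \<open>The full factorial design\<close>

definition grid_point :: "nat \<Rightarrow> real \<Rightarrow> nat set \<Rightarrow> real list" where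
  "grid_point k a T = map (\<lambda>j. if j \<in> T then a else 0) [0..<k]"

lemma length_grid_point [simp]: "length (grid_point k a T) = k"
  unfolding grid_point_def by simp

lemma grid_point_in_full_factorial: "grid_point k a T \<in> full_factorial k a"
  unfolding grid_point_def full_factorial_def by auto

lemma grid_point_eq_iff:
  assumes "a \<noteq> 0" "T \<subseteq> {..<k}" "U \<subseteq> {..<k}"
  shows "grid_point k a T = grid_point k a U \<longleftrightarrow> T = U"
proof
  assume eq: "grid_point k a T = grid_point k a U"
  have "j \<in> T \<longleftrightarrow> j \<in> U" if "j < k" for j
    using arg_cong[OF eq, of "\<lambda>x. x ! j"] that assms(1) by (simp add: grid_point_def split: if_split_asm)
  then show "T = U" using assms(2,3) by blast
qed simp

lemma lagrange_basis_full_factorial: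
  assumes "a \<noteq> 0" "x \<in> full_factorial k a" "T \<subseteq> {..<k}"
  shows "lagrange_basis k a T x = (if x = grid_point k a T then 1 else 0)"
proof (cases "x = grid_point k a T")
  case True
  have "lagrange_basis k a T (grid_point k a T) = 1"
    using assms(1) unfolding lagrange_basis_def grid_point_def by (intro prod.neutral) simp
  then show ?thesis using True by simp
next
  case False
  then obtain j where j: "j < k" "x ! j \<noteq> grid_point k a T ! j"
    using assms(2) nth_equalityI[of x "grid_point k a T"] by (auto simp: full_factorial_def)
  then have "(if j \<in> T then x ! j / a else 1 - x ! j / a) = 0"
    using assms(1,2) by (auto simp: full_factorial_def grid_point_def)
  then have "lagrange_basis k a T x = 0"
    unfolding lagrange_basis_def using j(1) by (intro prod_zero[OF finite_lessThan] bexI[of _ j]) auto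
  then show ?thesis using False by simp
qed

lemma finite_full_factorial: "finite (full_factorial k a)"
  and card_full_factorial: "a \<noteq> 0 \<Longrightarrow> card (full_factorial k a) = 2 ^ k"
proof -
  have eq: "full_factorial k a = {xs. set xs \<subseteq> {0, a} \<and> length xs = k}"
    unfolding full_factorial_def by (auto simp: set_conv_nth)
  show "finite (full_factorial k a)"
    unfolding eq by (rule finite_lists_length_eq) simp
  show "card (full_factorial k a) = 2 ^ k" if "a \<noteq> 0"
    unfolding eq using that by (subst card_lists_length_eq) (simp_all add: numeral_2_eq_2)
qed

lemma lagrange_info_mat_full_factorial:
  assumes "a \<noteq> 0" "i < 2 ^ k" "j < 2 ^ k"
  shows "lagrange_info_mat k a \<beta> (full_factorial k a) w $$ (i, j) =
    (if i = j then w (grid_point k a (monset k i)) * intensity k \<beta> (grid_point k a (monset k i)) else 0)"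
proof -
  let ?p = "\<lambda>m. grid_point k a (monset k m)"
  have "?p i = ?p j \<longleftrightarrow> i = j"
    using grid_point_eq_iff[OF assms(1) monset_subset monset_subset]
      bij_betw_monset[of k, THEN bij_betw_imp_inj_on, THEN inj_onD] assms(2,3) by blast
  then have "lagrange_info_mat k a \<beta> (full_factorial k a) w $$ (i, j) =
      (\<Sum>x\<in>full_factorial k a. if x = ?p i then (if i = j then w x * intensity k \<beta> x else 0) else 0)"
    using assms
    by (auto simp: lagrange_info_mat_def gram_mat_def
        lagrange_basis_full_factorial[OF assms(1) _ monset_subset] intro!: sum.cong)
  then show ?thesis
    by (simp add: finite_full_factorial grid_point_in_full_factorial)
qed

lemma det_lagrange_info_mat_full_factorial:
  assumes "a \<noteq> 0"
  shows "det (lagrange_info_mat k a \<beta> (full_factorial k a) w) =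
    (\<Prod>m<2 ^ k. w (grid_point k a (monset k m)) * intensity k \<beta> (grid_point k a (monset k m)))"
proof -
  let ?H = "lagrange_info_mat k a \<beta> (full_factorial k a) w"
  have H: "?H \<in> carrier_mat (2 ^ k) (2 ^ k)"
    by (simp add: lagrange_info_mat_def gram_mat_def)
  have "det ?H = prod_list (diag_mat ?H)"
    by (rule det_upper_triangular[OF _ H])
      (use H in \<open>auto simp: upper_triangular_def lagrange_info_mat_full_factorial[OF assms]\<close>)
  then show ?thesis
    using H by (simp add: prod_list_diag_prod atLeast0LessThan lagrange_info_mat_full_factorial[OF assms])
qed

lemma is_design_full_factorial:
  assumes "0 < a"
  shows "is_design k (nonneg_orthant k) (full_factorial k a) (\<lambda>x. 1 / 2 ^ k)"
  unfolding is_design_def using assms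
  by (auto simp: finite_full_factorial card_full_factorial)
    (auto simp: full_factorial_def nonneg_orthant_def)

lemma prod_exp_minus_grid_point:
  assumes "T \<subseteq> {..<k}"
  shows "(\<Prod>j<k. exp (- (grid_point k a T ! j))) = exp (- a) ^ card T"
proof -
  have "(\<Prod>j<k. exp (- (grid_point k a T ! j))) = (\<Prod>j<k. if j \<in> T then exp (- a) else 1)"
    by (rule prod.cong) (auto simp: grid_point_def)
  then show ?thesis by (simp add: prod_if_subset[OF finite_lessThan assms])
qed

section \<open>The sensitivity bound\<close>

definition sensitivity_factor :: "real \<Rightarrow> real" where
  "sensitivity_factor t = (exp 2 * (t / 2)\<^sup>2 + (1 - t / 2)\<^sup>2) * exp (- t)"

lemma sensitivity_factor_deriv:
  "(sensitivity_factor has_real_derivative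
      - ((1 + exp 2) / 4 * exp (- t)) * ((t - 2) * (t - 4 / (1 + exp 2)))) (at t)"
proof -
  have pos: "1 + exp 2 \<noteq> (0::real)" using exp_gt_zero[of 2] by linarith
  show ?thesis
    unfolding sensitivity_factor_def
    by (rule derivative_eq_intros refl | simp)+ (use pos in \<open>simp add: field_simps power2_eq_square\<close>)
qed

lemma sensitivity_factor_le_one:
  assumes "0 \<le> t"
  shows "sensitivity_factor t \<le> 1"
proof -
  define r :: real where "r = 4 / (1 + exp 2)"
  define C :: real where "C = (1 + exp 2) / 4"
  have C: "0 < C" unfolding C_def by (simp add: add_pos_pos)
  have r: "r \<le> 2" unfolding r_def
    using exp_ge_add_one_self[of 2] by (simp add: field_simps add_pos_pos)
  have deriv: "(sensitivity_factor has_real_derivative - (C * exp (- x)) * ((x - 2) * (x - r))) (at x)" for x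
    unfolding C_def r_def by (rule sensitivity_factor_deriv)
  have "sensitivity_factor 0 = 1" "sensitivity_factor 2 = 1"
    by (simp_all add: sensitivity_factor_def exp_minus field_simps)
  \<comment> \<open>the function falls on [0, r], rises on [r, 2] and falls on [2, \<infinity>)\<close>
  consider "t \<le> r" | "r \<le> t" "t \<le> 2" | "2 \<le> t" by linarith
  then show ?thesis
  proof cases
    case 1
    have "sensitivity_factor t \<le> sensitivity_factor 0"
    proof (rule DERIV_nonpos_imp_nonincreasing[OF assms])
      fix x assume "0 \<le> x" "x \<le> t"
      then have "0 \<le> (x - 2) * (x - r)" using 1 r by (intro mult_nonpos_nonpos) auto
      then show "\<exists>y. (sensitivity_factor has_real_derivative y) (at x) \<and> y \<le> 0"
        using deriv C by (intro exI conjI) (auto simp: mult_nonneg_nonneg)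
    qed
    then show ?thesis using \<open>sensitivity_factor 0 = 1\<close> by simp
  next
    case 2
    have "sensitivity_factor t \<le> sensitivity_factor 2"
    proof (rule DERIV_nonneg_imp_nondecreasing[OF 2(2)])
      fix x assume "t \<le> x" "x \<le> 2"
      then have "(x - 2) * (x - r) \<le> 0" using 2 by (intro mult_nonpos_nonneg) auto
      then show "\<exists>y. (sensitivity_factor has_real_derivative y) (at x) \<and> 0 \<le> y"
        using deriv C by (intro exI conjI) (auto simp: mult_nonneg_nonpos)
    qed
    then show ?thesis using \<open>sensitivity_factor 2 = 1\<close> by simp
  next
    case 3
    have "sensitivity_factor t \<le> sensitivity_factor 2"
    proof (rule DERIV_nonpos_imp_nonincreasing[OF 3])
      fix x assume "2 \<le> x" "x \<le> t"
      then have "0 \<le> (x - 2) * (x - r)" using r by (intro mult_nonneg_nonneg) auto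
      then show "\<exists>y. (sensitivity_factor has_real_derivative y) (at x) \<and> y \<le> 0"
        using deriv C by (intro exI conjI) (auto simp: mult_nonneg_nonneg)
    qed
    then show ?thesis using \<open>sensitivity_factor 2 = 1\<close> by simp
  qed
qed

lemma sum_lagrange_info_diag_ratios_le:
  assumes intensity: "\<And>x. intensity k \<beta> x = (\<Prod>j<k. exp (- (x ! j)))"
    and design: "is_design k (nonneg_orthant k) S w"
  shows "(\<Sum>m<2 ^ k. lagrange_info_mat k 2 \<beta> S w $$ (m, m) / (exp (-2) ^ card (monset k m) / 2 ^ k))
    \<le> 2 ^ k"
proof -
  have S: "S \<subseteq> nonneg_orthant k"
    and w: "\<And>x. x \<in> S \<Longrightarrow> 0 \<le> w x" "(\<Sum>x\<in>S. w x) = 1"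
    using design unfolding is_design_def by auto
  let ?L = "\<lambda>m. lagrange_basis k 2 (monset k m)"
  have "(\<Sum>m<2 ^ k. lagrange_info_mat k 2 \<beta> S w $$ (m, m) / (exp (-2) ^ card (monset k m) / 2 ^ k))
      = (\<Sum>m<2 ^ k. \<Sum>x\<in>S. 2 ^ k * w x * intensity k \<beta> x * ((?L m x)\<^sup>2 * exp 2 ^ card (monset k m)))"
    unfolding lagrange_info_mat_def gram_mat_def
    by (intro sum.cong)
      (simp_all add: sum_divide_distrib sum_distrib_left exp_minus power_inverse power2_eq_square
        field_simps)
  also have "\<dots> = (\<Sum>x\<in>S. 2 ^ k * w x * intensity k \<beta> x *
      (\<Prod>j<k. exp 2 * (x ! j / 2)\<^sup>2 + (1 - x ! j / 2)\<^sup>2))"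
    by (subst sum.swap) (simp add: sum_sq_lagrange_basis flip: sum_distrib_left)
  also have "\<dots> = (\<Sum>x\<in>S. 2 ^ k * w x * (\<Prod>j<k. sensitivity_factor (x ! j)))"
    by (simp add: intensity sensitivity_factor_def prod.distrib mult_ac)
  also have "\<dots> \<le> (\<Sum>x\<in>S. 2 ^ k * w x)"
  proof (rule sum_mono)
    fix x assume "x \<in> S"
    then have "0 \<le> x ! j" if "j < k" for j
      using S that by (auto simp: nonneg_orthant_def)
    then have "(\<Prod>j<k. sensitivity_factor (x ! j)) \<le> 1"
      using sensitivity_factor_le_one by (intro prod_le_1) (auto simp: sensitivity_factor_def)
    then show "2 ^ k * w x * (\<Prod>j<k. sensitivity_factor (x ! j)) \<le> 2 ^ k * w x"
      using w(1)[OF \<open>x \<in> S\<close>] by (simp add: mult_left_le)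
  qed
  also have "\<dots> = 2 ^ k"
    using w(2) by (simp flip: sum_distrib_left)
  finally show ?thesis .
qed

lemma det_lagrange_info_mat_le_full_factorial:
  assumes intensity: "\<And>x. intensity k \<beta> x = (\<Prod>j<k. exp (- (x ! j)))"
    and design: "is_design k (nonneg_orthant k) S w"
  shows "det (lagrange_info_mat k 2 \<beta> S w)
    \<le> det (lagrange_info_mat k 2 \<beta> (full_factorial k 2) (\<lambda>x. 1 / 2 ^ k))"
proof -
  let ?H = "lagrange_info_mat k 2 \<beta> S w"
  define d :: "nat \<Rightarrow> real" where "d m = exp (-2) ^ card (monset k m) / 2 ^ k" for m
  have weights: "0 \<le> w x * intensity k \<beta> x" if "x \<in> S" for x
    using design that by (simp add: is_design_def intensity_def)
  have "det ?H \<le> (\<Prod>m<2 ^ k. ?H $$ (m, m))"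
    unfolding lagrange_info_mat_def by (rule det_gram_mat_le_prod_diag[OF weights])
  also have "\<dots> \<le> (\<Prod>m<2 ^ k. d m)"
    using psd_mat_diag_nonneg[OF psd_gram_mat[OF weights]]
      sum_lagrange_info_diag_ratios_le[OF intensity design]
    by (intro prod_le_prod_if_sum_ratios_le_card) (auto simp: d_def lagrange_info_mat_def)
  also have "\<dots> = det (lagrange_info_mat k 2 \<beta> (full_factorial k 2) (\<lambda>x. 1 / 2 ^ k))"
    by (simp add: det_lagrange_info_mat_full_factorial intensity prod_exp_minus_grid_point
        monset_subset d_def)
  finally show ?thesis .
qed

theorem theorem4:
  fixes k :: nat and \<beta> :: "nat \<Rightarrow> real"
  assumes "k \<ge> 3"
    and "\<beta> 0 = 0"
    and "\<And>j. j < k \<Longrightarrow> \<beta> (2 ^ j) = -1"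
    and "\<And>m. m < 2 ^ k \<Longrightarrow> card (monset k m) \<ge> 2 \<Longrightarrow> \<beta> m = 0"
  shows "locally_D_optimal k \<beta> (nonneg_orthant k) (full_factorial k 2) (\<lambda>x. 1 / 2 ^ k)"
proof -
  \<comment> \<open>the argument works for every k\<close>
  have intensity: "intensity k \<beta> x = (\<Prod>j<k. exp (- (x ! j)))" for x
    using intensity_main_effects[of \<beta> k x] assms(2-4) by simp
  show ?thesis
    unfolding locally_D_optimal_def
    using is_design_full_factorial[of 2 k] det_lagrange_info_mat_le_full_factorial[OF intensity]
    by (auto simp: det_info_mat_eq_det_lagrange_info_mat[of 2] intro: mult_left_mono)
qed

end
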